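(* Let $Q>0$ and let $\gamma_+$ be the larger root of $\gamma-\log\gamma=Q+1$. For $x>0$ let $w_{ex}(t)=\frac{x}{\gamma_+}t^{\frac{1-\gamma_+}{\gamma_+}}$ on $I=[0,1]$. Then $[w_{ex}]_{RH_1,[0,1]}\le Q$; for every $0<\varepsilon<\frac{1}{\gamma_+-1}$, $$\langle w_{ex}^{1+\varepsilon}\rangle_I=B\big(\langle w_{ex}\rangle_I,\langle w_{ex}\log w_{ex}\rangle_I\big),$$ where $B(x,y)=\frac{v^{\varepsilon}}{1+\varepsilon-\gamma_+\varepsilon}\big(x(1+\varepsilon)-\varepsilon\gamma_+v\big)$ with $v=v(x,y)$ determined by $y=(\log v+\gamma_+)x-v\gamma_+$, $v\le x\le\gamma_+ v$; and finally $\langle w_{ex}^{1+\frac{1}{\gamma_+-1}}\rangle_I=\infty$.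
   Context: $\langle f\rangle_J=\frac1{|J|}\int_J f$. For a weight $w$ on $[0,1]$, $[w]_{RH_1,[0,1]}=\sup_{J\subset[0,1]}\Big\langle \frac{w}{\langle w\rangle_J}\log\frac{w}{\langle w\rangle_J}\Big\rangle_J$, supremum over subintervals $J$. *)

theory Defs
  imports "HOL-Analysis.Analysis"
begin

definition avg :: "real \<Rightarrow> real \<Rightarrow> (real \<Rightarrow> real) \<Rightarrow> real" where
  "avg a b f = (LBINT t:{a..b}. f t) / (b - a)"

definition RH1_01 :: "(real \<Rightarrow> real) \<Rightarrow> ereal" where
  "RH1_01 w = (SUP J \<in> {(a, b). 0 \<le> a \<and> a < b \<and> b \<le> (1::real)}.
      ereal (avg (fst J) (snd J)
        (\<lambda>t. (w t / avg (fst J) (snd J) w) * ln (w t / avg (fst J) (snd J) w))))"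

definition Bfun :: "real \<Rightarrow> real \<Rightarrow> real \<Rightarrow> real \<Rightarrow> real" where
  "Bfun g \<epsilon> x y =
     (let v = (THE v. 0 < v \<and> v \<le> x \<and> x \<le> g * v \<and> y = (ln v + g) * x - v * g)
      in v powr \<epsilon> / (1 + \<epsilon> - g * \<epsilon>) * (x * (1 + \<epsilon>) - \<epsilon> * g * v))"

end

theory Submission
  imports Defs "HOL-Real_Asymp.Real_Asymp"
begin

text \<open>With \<open>p = 1/\<gamma>\<close> the weight is a multiple of \<open>t powr (p - 1)\<close>, so on every
  \<open>J = [c,d] \<subseteq> [0,1]\<close> its averages are explicit. The normalised entropy of the weight on \<open>J\<close>
  equals \<open>1/p - 1 + ln p = \<gamma> - 1 - ln \<gamma> = Q\<close> plus
  \<open>ln ((d - c) / (d\<^sup>p - c\<^sup>p)) + (p - 1) (d\<^sup>p ln d - c\<^sup>p ln c) / (d\<^sup>p - c\<^sup>p)\<close>,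
  and this correction is \<open>\<le> 0\<close> by two applications of \<open>ln z \<le> z - 1\<close>. On \<open>[0,1]\<close> one gets
  \<open>\<langle>w\<rangle> = x\<close> and \<open>\<langle>w log w\<rangle> = x log (x/\<gamma>) + (\<gamma> - 1) x\<close>, which forces \<open>v = x/\<gamma>\<close> in the
  definition of \<open>B\<close>; then \<open>\<langle>w\<^sup>1\<^sup>+\<^sup>\<epsilon>\<rangle>\<close> is a power integral matching \<open>B\<close>. At
  \<open>\<epsilon> = 1/(\<gamma> - 1)\<close> the power \<open>w\<^sup>1\<^sup>+\<^sup>\<epsilon>\<close> is a multiple of \<open>1/t\<close>.\<close>

lemma continuous_on_powr_times_ln:
  assumes "r > (0::real)"
  shows "continuous_on {0..} (\<lambda>t. t powr r * ln t)"
proof (clarsimp simp: continuous_on_eq_continuous_within)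
  fix t :: real assume t: "0 \<le> t"
  show "continuous (at t within {0..}) (\<lambda>t. t powr r * ln t)"
  proof (cases "t = 0")
    case True
    have "((\<lambda>t. t powr r * ln t) \<longlongrightarrow> 0) (at_right 0)"
      using assms by real_asymp
    then show ?thesis
      using True by (simp add: continuous_within at_within_Ici_at_right)
  next
    case False
    then have "isCont (\<lambda>t. t powr r * ln t) t"
      using t by (intro continuous_intros) auto
    then show ?thesis by (rule continuous_at_imp_continuous_within)
  qed
qed

lemma has_integral_powr:
  fixes q c d :: real
  assumes q: "q > -1" and cd: "0 \<le> c" "c \<le> d"
  shows "((\<lambda>t. t powr q) has_integral (d powr (q + 1) - c powr (q + 1)) / (q + 1)) {c..d}"
proof -
  let ?F = "\<lambda>t. t powr (q + 1) / (q + 1)"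
  have "((\<lambda>t. t powr q) has_integral (?F d - ?F c)) {c..d}"
  proof (rule fundamental_theorem_of_calculus_interior)
    show "continuous_on {c..d} ?F"
      using q cd by (intro continuous_on_divide continuous_on_powr' continuous_intros) auto
    fix t assume "t \<in> {c<..<d}"
    then have "t > 0" using cd by auto
    from DERIV_cdivide[OF has_real_derivative_powr[OF this, of "q + 1"], of "q + 1"]
    show "(?F has_vector_derivative t powr q) (at t)"
      using q by (simp add: has_real_derivative_iff_has_vector_derivative[symmetric])
  qed (use cd in auto)
  then show ?thesis by (simp add: diff_divide_distrib)
qed

lemma has_integral_powr_times_ln:
  fixes q c d :: real
  assumes q: "q > -1" and cd: "0 \<le> c" "c \<le> d"
  shows "((\<lambda>t. t powr q * ln t) has_integral
           (d powr (q + 1) * ln d - c powr (q + 1) * ln c) / (q + 1)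
             - (d powr (q + 1) - c powr (q + 1)) / (q + 1)^2) {c..d}"
proof -
  define F where "F t = t powr (q + 1) * ln t / (q + 1) - t powr (q + 1) / (q + 1)^2" for t
  have "((\<lambda>t. t powr q * ln t) has_integral (F d - F c)) {c..d}"
  proof (rule fundamental_theorem_of_calculus_interior)
    have "continuous_on {c..d} (\<lambda>t. t powr (q + 1) * ln t)"
      by (rule continuous_on_subset[OF continuous_on_powr_times_ln]) (use q cd in auto)
    moreover have "continuous_on {c..d} (\<lambda>t. t powr (q + 1))"
      using q cd by (intro continuous_on_powr' continuous_intros) auto
    ultimately show "continuous_on {c..d} F"
      unfolding F_def by (intro continuous_on_diff continuous_on_divide continuous_on_const) (use q in auto)
    fix t assume "t \<in> {c<..<d}"
    then have t: "t > 0" using cd by auto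
    have "(F has_real_derivative ((q + 1) * t powr (q + 1 - 1) * ln t + inverse t * t powr (q + 1)) / (q + 1)
                                  - (q + 1) * t powr (q + 1 - 1) / (q + 1)^2) (at t)"
      unfolding F_def
      by (rule DERIV_diff[OF DERIV_cdivide[OF DERIV_mult[OF has_real_derivative_powr[OF t] DERIV_ln[OF t]]]
            DERIV_cdivide[OF has_real_derivative_powr[OF t]]])
    moreover have "((q + 1) * t powr (q + 1 - 1) * ln t + inverse t * t powr (q + 1)) / (q + 1)
                     - (q + 1) * t powr (q + 1 - 1) / (q + 1)^2 = t powr q * ln t"
    proof -
      have "inverse t * t powr (q + 1) = t powr q"
        using t by (simp add: powr_add)
      moreover have "(q + 1) * t powr q / (q + 1)^2 = t powr q / (q + 1)"
        using q by (simp add: power2_eq_square)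
      ultimately show ?thesis
        using q by (simp add: add_divide_distrib)
    qed
    ultimately have "(F has_real_derivative t powr q * ln t) (at t)"
      by simp
    then show "(F has_vector_derivative t powr q * ln t) (at t)"
      by (simp add: has_real_derivative_iff_has_vector_derivative[symmetric])
  qed (use cd in auto)
  then show ?thesis
    unfolding F_def by (simp add: diff_divide_distrib algebra_simps)
qed

lemma set_integral_lborel_of_has_integral:
  fixes f :: "'a::euclidean_space \<Rightarrow> real"
  assumes I: "(f has_integral V) S" and f: "f absolutely_integrable_on S"
    and meas: "f \<in> borel_measurable borel" and S: "S \<in> sets borel"
  shows "set_integrable lborel S f" "(LINT t:S|lborel. f t) = V"
proof -
  have "(\<lambda>t. indicator S t *\<^sub>R f t) \<in> borel_measurable lborel"
    using meas S by measurable
  then show si: "set_integrable lborel S f"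
    using f unfolding set_integrable_def by (simp add: integrable_completion)
  show "(LINT t:S|lborel. f t) = V"
    using set_borel_integral_eq_integral(2)[OF si] I by (simp add: integral_unique)
qed

lemma set_integral_powr:
  fixes q c d :: real
  assumes "q > -1" "0 \<le> c" "c \<le> d"
  shows "set_integrable lborel {c..d} (\<lambda>t. t powr q)"
    "(LBINT t:{c..d}. t powr q) = (d powr (q + 1) - c powr (q + 1)) / (q + 1)"
  using has_integral_powr[OF assms]
  by (auto intro!: set_integral_lborel_of_has_integral simp: absolutely_integrable_on_iff_nonneg integrable_on_def)

lemma set_integral_powr_times_ln:
  fixes q c d :: real
  assumes q: "q > -1" and cd: "0 \<le> c" "c \<le> d" and d: "d \<le> 1"
  shows "set_integrable lborel {c..d} (\<lambda>t. t powr q * ln t)"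
    "(LBINT t:{c..d}. t powr q * ln t) =
       (d powr (q + 1) * ln d - c powr (q + 1) * ln c) / (q + 1) - (d powr (q + 1) - c powr (q + 1)) / (q + 1)^2"
proof -
  note I = has_integral_powr_times_ln[OF q cd]
  have "t powr q * ln t \<le> 0" if "t \<in> {c..d}" for t
    using that cd d by (cases "t = 0") (auto intro: mult_nonneg_nonpos)
  then have "(\<lambda>t. - (t powr q * ln t)) absolutely_integrable_on {c..d}"
    using has_integral_neg[OF I] by (subst absolutely_integrable_on_iff_nonneg) (auto simp: integrable_on_def)
  then have "(\<lambda>t. t powr q * ln t) absolutely_integrable_on {c..d}"
    using absolutely_integrable_on_scaleR_iff[where c = "-1" and f = "\<lambda>t. - (t powr q * ln t)"] by simp
  then show "set_integrable lborel {c..d} (\<lambda>t. t powr q * ln t)"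
    "(LBINT t:{c..d}. t powr q * ln t) =
       (d powr (q + 1) * ln d - c powr (q + 1) * ln c) / (q + 1) - (d powr (q + 1) - c powr (q + 1)) / (q + 1)^2"
    using I by (auto intro!: set_integral_lborel_of_has_integral)
qed

lemma powr_times_one_plus_ln_le:
  fixes p c d :: real
  assumes c: "0 \<le> c" and d: "0 < d"
  shows "c powr p * (1 + (1 - p) * (ln c - ln d)) \<le> c * d powr (p - 1)"
proof (cases "c = 0")
  case False
  then have c: "c > 0" using c by simp
  define z where "z = (c / d) powr (1 - p)"
  have "z > 0"
    unfolding z_def using c d by simp
  then have "ln z \<le> z - 1"
    by (rule ln_le_minus_one)
  moreover have "ln z = (1 - p) * (ln c - ln d)"
    unfolding z_def using c d by (simp add: ln_div)
  ultimately have "1 + (1 - p) * (ln c - ln d) \<le> z"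
    by simp
  then have "c powr p * (1 + (1 - p) * (ln c - ln d)) \<le> c powr p * z"
    by (simp add: mult_left_mono)
  also have "c powr p * z = c * d powr (p - 1)"
    unfolding z_def using c d by (simp add: powr_divide powr_diff field_simps flip: powr_add)
  finally show ?thesis .
qed simp

lemma ln_secant_powr_le:
  fixes p c d :: real
  assumes p: "0 < p" "p < 1" and cd: "0 \<le> c" "c < d"
  shows "ln ((d - c) / (d powr p - c powr p))
           + (p - 1) * (d powr p * ln d - c powr p * ln c) / (d powr p - c powr p) \<le> 0"
proof -
  have d: "d > 0" using cd by simp
  define D where "D = d powr p - c powr p"
  define N where "N = d powr p * ln d - c powr p * ln c"
  define X where "X = d powr (p - 1) * (d - c) / D"
  have D: "D > 0"
    unfolding D_def using powr_less_mono2[OF p(1) cd] by simp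
  have X: "X > 0"
    unfolding X_def using D cd by simp
  have XD: "X * D = d powr p - d powr (p - 1) * c"
  proof -
    have "X * D = d powr (p - 1) * d - d powr (p - 1) * c"
      unfolding X_def using D by (simp add: right_diff_distrib)
    also have "d powr (p - 1) * d = d powr p"
      using d by (simp add: powr_diff)
    finally show ?thesis .
  qed
  have "(d - c) / D = d powr (1 - p) * X"
    unfolding X_def using d by (simp add: field_simps flip: powr_add)
  then have "ln ((d - c) / D) = (1 - p) * ln d + ln X"
    using d X by (simp add: ln_mult ln_powr)
  also have "\<dots> \<le> (1 - p) * ln d + X - 1"
    using ln_le_minus_one[OF X] by simp
  finally have "ln ((d - c) / D) + (p - 1) * N / D \<le> (1 - p) * ln d + X - 1 + (p - 1) * N / D"
    by simp
  also have "\<dots> = (c powr p * (1 + (1 - p) * (ln c - ln d)) - c * d powr (p - 1)) / D"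
    using D XD unfolding D_def N_def by (simp add: field_simps)
  also have "\<dots> \<le> 0"
    using powr_times_one_plus_ln_le[OF cd(1) d, of p] D by (simp add: divide_nonpos_pos)
  finally show ?thesis
    unfolding D_def N_def .
qed

lemma avg_entropy_power_weight:
  fixes C a c d :: real
  assumes C: "C > 0" and a: "a > -1" and cd: "0 \<le> c" "c < d" "d \<le> 1"
  defines "u \<equiv> \<lambda>t. C * t powr a"
    and "I0 \<equiv> LBINT t:{c..d}. t powr a" and "I1 \<equiv> LBINT t:{c..d}. t powr a * ln t"
  shows "avg c d (\<lambda>t. u t / avg c d u * ln (u t / avg c d u)) = ln ((d - c) / I0) + a * I1 / I0"
proof -
  note int0 = set_integral_powr[OF a cd(1) less_imp_le[OF cd(2)]]
  note int1 = set_integral_powr_times_ln[OF a cd(1) less_imp_le[OF cd(2)] cd(3)]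
  have I0: "I0 > 0"
    unfolding I0_def int0(2) using powr_less_mono2[of "a+1" c d] a cd by simp
  define K where "K = (d - c) / I0"
  have K: "K > 0"
    unfolding K_def using I0 cd by simp
  have avg_u: "avg c d u = C * I0 / (d - c)"
    unfolding avg_def u_def I0_def using int0 by (simp add: set_integral_mult_right)
  have "u t / avg c d u * ln (u t / avg c d u) = K * ln K * t powr a + K * a * (t powr a * ln t)"
    if "t \<in> {c..d}" for t
  proof -
    have "u t / avg c d u = K * t powr a"
      unfolding avg_u K_def using C I0 cd by (simp add: u_def field_simps)
    moreover have "t = 0 \<or> ln (K * t powr a) = ln K + a * ln t"
      using K that cd by (auto simp: ln_mult ln_powr)
    ultimately show ?thesis
      by (auto simp: algebra_simps)
  qed
  then have "(LBINT t:{c..d}. u t / avg c d u * ln (u t / avg c d u))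
      = (LBINT t:{c..d}. K * ln K * t powr a + K * a * (t powr a * ln t))"
    by (intro set_lebesgue_integral_cong) auto
  also have "\<dots> = K * ln K * I0 + K * a * I1"
    unfolding I0_def I1_def using int0 int1 by (simp add: set_integral_mult_right)
  finally have "avg c d (\<lambda>t. u t / avg c d u * ln (u t / avg c d u)) = (K * ln K * I0 + K * a * I1) / (d - c)"
    unfolding avg_def[of c d "\<lambda>t. u t / avg c d u * ln (u t / avg c d u)"] by simp
  also have "K * ln K * I0 + K * a * I1 = (K * I0) * (ln K + a * I1 / I0)"
    using I0 by (simp add: field_simps)
  also have "K * I0 = d - c"
    unfolding K_def using I0 by simp
  finally show ?thesis
    unfolding K_def using cd by simp
qed

lemma avg_entropy_power_weight_le:
  fixes C a c d :: real
  assumes C: "C > 0" and a: "-1 < a" "a < 0" and cd: "0 \<le> c" "c < d" "d \<le> 1"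
  defines "u \<equiv> \<lambda>t. C * t powr a"
  shows "avg c d (\<lambda>t. u t / avg c d u * ln (u t / avg c d u)) \<le> 1 / (a + 1) - 1 + ln (a + 1)"
proof -
  define p where "p = a + 1"
  have p: "0 < p" "p < 1"
    unfolding p_def using a by auto
  define D where "D = d powr p - c powr p"
  define N where "N = d powr p * ln d - c powr p * ln c"
  have D: "D > 0"
    unfolding D_def using powr_less_mono2[OF p(1) cd(1,2)] by simp
  have I0: "(LBINT t:{c..d}. t powr a) = D / p"
    unfolding D_def p_def using set_integral_powr(2)[OF a(1) cd(1) less_imp_le[OF cd(2)]] by simp
  have I1: "(LBINT t:{c..d}. t powr a * ln t) = N / p - D / p^2"
    unfolding D_def N_def p_def
    using set_integral_powr_times_ln(2)[OF a(1) cd(1) less_imp_le[OF cd(2)] cd(3)]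
    by (simp add: diff_divide_distrib)
  have "ln ((d - c) / (D / p)) = ln p + ln ((d - c) / D)"
    using D p cd by (simp add: ln_div ln_mult)
  moreover have "a * (N / p - D / p^2) / (D / p) = (p - 1) * N / D + 1 / p - 1"
  proof -
    have a_eq: "a = p - 1"
      unfolding p_def by simp
    show ?thesis
      unfolding a_eq using D p by (simp add: field_simps power2_eq_square)
  qed
  ultimately have "ln ((d - c) / (D / p)) + a * (N / p - D / p^2) / (D / p)
      = ln p - 1 + 1 / p + (ln ((d - c) / D) + (p - 1) * N / D)"
    by simp
  also have "\<dots> \<le> ln p - 1 + 1 / p"
    using ln_secant_powr_le[OF p cd(1,2)] unfolding D_def N_def by simp
  finally show ?thesis
    unfolding u_def avg_entropy_power_weight[OF C a(1) cd] I0 I1 p_def by simp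
qed

lemma RH1_power_weight_le:
  fixes C a :: real
  assumes "C > 0" "-1 < a" "a < 0"
  shows "RH1_01 (\<lambda>t. C * t powr a) \<le> ereal (1 / (a + 1) - 1 + ln (a + 1))"
  unfolding RH1_01_def
  by (rule SUP_least, clarify, simp only: fst_conv snd_conv ereal_less_eq(3))
    (rule avg_entropy_power_weight_le[OF assms])

lemma avg_01_power_weight:
  fixes C a :: real
  assumes C: "C > 0" and a: "a > -1"
  shows "avg 0 1 (\<lambda>t. C * t powr a) = C / (a + 1)"
    and "avg 0 1 (\<lambda>t. C * t powr a * ln (C * t powr a)) = C * ln C / (a + 1) - C * a / (a + 1)^2"
proof -
  note int0 = set_integral_powr[OF a, of 0 1, simplified]
  note int1 = set_integral_powr_times_ln[OF a, of 0 1, simplified]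
  show "avg 0 1 (\<lambda>t. C * t powr a) = C / (a + 1)"
    unfolding avg_def using int0 by (simp add: set_integral_mult_right)
  have "C * t powr a * ln (C * t powr a) = C * ln C * t powr a + C * a * (t powr a * ln t)"
    if "t \<in> {0..1}" for t
  proof (cases "t = 0")
    case False
    then have "ln (C * t powr a) = ln C + a * ln t"
      using C that by (simp add: ln_mult ln_powr)
    then show ?thesis
      by (simp add: algebra_simps)
  qed simp
  then have "(LBINT t:{0..1}. C * t powr a * ln (C * t powr a))
      = (LBINT t:{0..1}. C * ln C * t powr a + C * a * (t powr a * ln t))"
    by (intro set_lebesgue_integral_cong) auto
  also have "\<dots> = C * ln C / (a + 1) - C * a / (a + 1)^2"
    using int0 int1 by (simp add: set_integral_mult_right)
  finally show "avg 0 1 (\<lambda>t. C * t powr a * ln (C * t powr a)) = C * ln C / (a + 1) - C * a / (a + 1)^2"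
    unfolding avg_def by simp
qed

lemma avg_01_power_weight_powr:
  fixes C a r :: real
  assumes C: "C > 0" and ar: "a * r > -1"
  shows "set_integrable lborel {0..1} (\<lambda>t. (C * t powr a) powr r)"
    and "avg 0 1 (\<lambda>t. (C * t powr a) powr r) = C powr r / (a * r + 1)"
proof -
  have eq: "(\<lambda>t. (C * t powr a) powr r) = (\<lambda>t. C powr r * t powr (a * r))"
    by (simp add: powr_mult powr_powr)
  note int = set_integral_powr[OF ar, of 0 1, simplified]
  show "set_integrable lborel {0..1} (\<lambda>t. (C * t powr a) powr r)"
    unfolding eq using int by (intro set_integrable_mult_right) auto
  show "avg 0 1 (\<lambda>t. (C * t powr a) powr r) = C powr r / (a * r + 1)"
    unfolding eq avg_def using int by (simp add: set_integral_mult_right)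
qed

lemma Bfun_at_boundary:
  fixes g \<epsilon> x :: real
  assumes g: "g > 1" and x: "x > 0"
  shows "Bfun g \<epsilon> x (x * ln (x / g) + (g - 1) * x) = (x / g) powr \<epsilon> * x / (1 + \<epsilon> - g * \<epsilon>)"
proof -
  have v_eq: "(THE v. 0 < v \<and> v \<le> x \<and> x \<le> g * v \<and> x * ln (x / g) + (g - 1) * x = (ln v + g) * x - v * g)
      = x / g"
  proof (rule the_equality)
    show "0 < x / g \<and> x / g \<le> x \<and> x \<le> g * (x / g)
          \<and> x * ln (x / g) + (g - 1) * x = (ln (x / g) + g) * x - x / g * g"
      using x g by (auto simp: field_simps)
  next
    fix v
    assume v: "0 < v \<and> v \<le> x \<and> x \<le> g * v \<and> x * ln (x / g) + (g - 1) * x = (ln v + g) * x - v * g"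
    \<comment> \<open>the defining equation of \<open>v\<close> reduces to \<open>ln z = z - 1\<close>, whose only root is \<open>z = 1\<close>\<close>
    define z where "z = v * g / x"
    have z: "z > 0"
      unfolding z_def using v x g by simp
    have "ln v = ln z + ln (x / g)"
      unfolding z_def using v x g by (simp add: ln_mult ln_div)
    then have "ln z = z - 1"
      using v x g unfolding z_def by (simp add: field_simps)
    then have "z = 1"
      using z ln_eq_minus_one by blast
    then show "v = x / g"
      unfolding z_def using x g by (simp add: field_simps)
  qed
  show ?thesis
    unfolding Bfun_def Let_def v_eq using g by (simp add: field_simps)
qed

lemma nn_integral_inverse_01_eq_infinity:
  fixes C :: real
  assumes C: "C > 0"
  shows "(\<integral>\<^sup>+ t \<in> {0..1}. ennreal (C / t) \<partial>lborel) = \<infinity>"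
proof -
  define N where "N = (\<integral>\<^sup>+ t \<in> {0..1}. ennreal (C / t) \<partial>lborel)"
  have N_ge: "ennreal M \<le> N" if "M \<ge> 0" for M
  proof -
    define s where "s = exp (- (M / C))"
    have s: "0 < s" "s \<le> 1"
      unfolding s_def using that C by auto
    have "((\<lambda>t. C / t) has_integral (C * ln 1 - C * ln s)) {s..1}"
    proof (rule fundamental_theorem_of_calculus_interior)
      show "continuous_on {s..1} (\<lambda>t. C * ln t)"
        using s by (intro continuous_intros) auto
      fix t assume "t \<in> {s<..<1}"
      then have "((\<lambda>t. C * ln t) has_real_derivative C * inverse t) (at t)"
        using s by (intro DERIV_cmult DERIV_ln) auto
      then show "((\<lambda>t. C * ln t) has_vector_derivative C / t) (at t)"
        by (simp add: has_real_derivative_iff_has_vector_derivative[symmetric] divide_inverse)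
    qed (use s in auto)
    then have "((\<lambda>t. C / t) has_integral M) {s..1}"
      using C by (simp add: s_def)
    then have "(\<integral>\<^sup>+ t \<in> {s..1}. ennreal (C / t) \<partial>lborel) = ennreal M"
      by (rule nn_integral_has_integral_lebesgue'[rotated]) (use s C in auto)
    then have "ennreal M = (\<integral>\<^sup>+ t \<in> {s..1}. ennreal (C / t) \<partial>lborel)" ..
    also have "\<dots> \<le> N"
      unfolding N_def using s by (intro nn_integral_mono) (auto split: split_indicator)
    finally show ?thesis .
  qed
  show ?thesis
    unfolding N_def[symmetric]
  proof (cases N rule: ennreal_cases)
    case (real r)
    then show "N = \<infinity>"
      using N_ge[of "r + 1"] by simp
  qed simp
qed

lemma avg_powr_extremal_weight_eq_Bfun:
  fixes g x \<epsilon> :: real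
  assumes g: "g > 1" and x: "x > 0" and \<epsilon>: "\<epsilon> < 1 / (g - 1)"
  defines "w \<equiv> \<lambda>t. x / g * t powr ((1 - g) / g)"
  shows "set_integrable lborel {0..1} (\<lambda>t. w t powr (1 + \<epsilon>))"
    and "avg 0 1 (\<lambda>t. w t powr (1 + \<epsilon>)) = Bfun g \<epsilon> (avg 0 1 w) (avg 0 1 (\<lambda>t. w t * ln (w t)))"
proof -
  define a where "a = (1 - g) / g"
  have C: "x / g > 0" and a: "a > -1"
    unfolding a_def using x g by (auto simp: field_simps)
  have den: "1 + \<epsilon> - g * \<epsilon> > 0"
    using \<epsilon> g by (simp add: field_simps)
  have ar: "a * (1 + \<epsilon>) + 1 = (1 + \<epsilon> - g * \<epsilon>) / g"
    unfolding a_def using g by (simp add: field_simps)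
  moreover have "(1 + \<epsilon> - g * \<epsilon>) / g > 0"
    using den g by simp
  ultimately have "a * (1 + \<epsilon>) > -1"
    by linarith
  note int = avg_01_power_weight_powr[OF C this]
  show "set_integrable lborel {0..1} (\<lambda>t. w t powr (1 + \<epsilon>))"
    using int(1) unfolding w_def a_def .
  have "avg 0 1 w = x / g / (a + 1)"
    using avg_01_power_weight(1)[OF C a] unfolding w_def a_def .
  also have "\<dots> = x"
    unfolding a_def using g by (simp add: field_simps)
  finally have avg_w: "avg 0 1 w = x" .
  have "avg 0 1 (\<lambda>t. w t * ln (w t)) = x / g * ln (x / g) / (a + 1) - x / g * a / (a + 1)^2"
    using avg_01_power_weight(2)[OF C a] unfolding w_def a_def .
  also have "\<dots> = x * ln (x / g) + (g - 1) * x"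
    unfolding a_def using g by (simp add: field_simps power2_eq_square)
  finally have avg_w_ln_w: "avg 0 1 (\<lambda>t. w t * ln (w t)) = x * ln (x / g) + (g - 1) * x" .
  have "avg 0 1 (\<lambda>t. w t powr (1 + \<epsilon>)) = (x / g) powr (1 + \<epsilon>) / (a * (1 + \<epsilon>) + 1)"
    using int(2) unfolding w_def a_def .
  also have "\<dots> = (x / g) powr \<epsilon> * x / (1 + \<epsilon> - g * \<epsilon>)"
    unfolding ar using x g den by (simp add: powr_add field_simps)
  also have "\<dots> = Bfun g \<epsilon> (avg 0 1 w) (avg 0 1 (\<lambda>t. w t * ln (w t)))"
    unfolding avg_w avg_w_ln_w Bfun_at_boundary[OF g x] ..
  finally show "avg 0 1 (\<lambda>t. w t powr (1 + \<epsilon>)) = Bfun g \<epsilon> (avg 0 1 w) (avg 0 1 (\<lambda>t. w t * ln (w t)))" .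
qed

lemma nn_integral_extremal_weight_critical_powr:
  fixes g x :: real
  assumes g: "g > 1" and x: "x > 0"
  shows "(\<integral>\<^sup>+ t \<in> {0..1}. ennreal ((x / g * t powr ((1 - g) / g)) powr (1 + 1 / (g - 1))) \<partial>lborel) = \<infinity>"
proof -
  have exponent: "(1 - g) / g * (1 + 1 / (g - 1)) = -1"
    using g by (simp add: field_simps)
  \<comment> \<open>at \<open>t = 0\<close> both sides vanish, as \<open>0 powr _ = 0\<close> and \<open>_ / 0 = 0\<close>\<close>
  have "(x / g * t powr ((1 - g) / g)) powr (1 + 1 / (g - 1)) = (x / g) powr (1 + 1 / (g - 1)) / t"
    if "t \<ge> 0" for t
    unfolding powr_mult powr_powr exponent using that by (simp add: powr_minus divide_inverse)
  then have "(\<integral>\<^sup>+ t \<in> {0..1}. ennreal ((x / g * t powr ((1 - g) / g)) powr (1 + 1 / (g - 1))) \<partial>lborel)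
      = (\<integral>\<^sup>+ t \<in> {0..1}. ennreal ((x / g) powr (1 + 1 / (g - 1)) / t) \<partial>lborel)"
    by (intro nn_integral_cong) (auto split: split_indicator)
  also have "\<dots> = \<infinity>"
    using x g by (intro nn_integral_inverse_01_eq_infinity) simp
  finally show ?thesis .
qed

lemma larger_root_gt_one:
  fixes Q g :: real
  assumes Q: "Q > 0" and g_root: "g - ln g = Q + 1"
    and g_larger: "\<forall>h>0. h - ln h = Q + 1 \<longrightarrow> h \<le> g"
  shows "g > 1"
proof -
  have "ln (2 * (Q + 1)) = ln 2 + ln (Q + 1)"
    using Q by (subst ln_mult) auto
  then have "ln (2 * (Q + 1)) \<le> Q + 1"
    using ln_le_minus_one[of "Q + 1"] Q ln_2_less_1 by simp
  moreover have "\<forall>t. 1 \<le> t \<and> t \<le> 2 * (Q + 1) \<longrightarrow> isCont (\<lambda>t. t - ln t) t"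
    by (auto intro!: continuous_intros)
  ultimately obtain h where h: "1 \<le> h" "h \<le> 2 * (Q + 1)" "h - ln h = Q + 1"
    using IVT[of "\<lambda>t. t - ln t" 1 "Q + 1" "2 * (Q + 1)"] Q by auto
  then have "h > 1"
    using Q by (cases "h = 1") auto
  moreover have "h \<le> g"
    using g_larger h by auto
  ultimately show ?thesis
    by simp
qed

theorem lemma7:
  fixes Q x g :: real and w :: "real \<Rightarrow> real"
  assumes Q: "Q > 0"
    and g_pos: "g > 0" and g_root: "g - ln g = Q + 1"
    and g_larger: "\<forall>h>0. h - ln h = Q + 1 \<longrightarrow> h \<le> g"
    and x: "x > 0"
    and w_def: "w = (\<lambda>t. x / g * t powr ((1 - g) / g))"
  shows "RH1_01 w \<le> ereal Q \<and>
         (\<forall>\<epsilon>. 0 < \<epsilon> \<and> \<epsilon> < 1 / (g - 1) \<longrightarrow>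
           set_integrable lborel {0..1} (\<lambda>t. w t powr (1 + \<epsilon>)) \<and>
           avg 0 1 (\<lambda>t. w t powr (1 + \<epsilon>)) =
             Bfun g \<epsilon> (avg 0 1 w) (avg 0 1 (\<lambda>t. w t * ln (w t)))) \<and>
         (\<integral>\<^sup>+ t \<in> {0..1}. ennreal (w t powr (1 + 1 / (g - 1))) \<partial>lborel) = \<infinity>"
proof -
  have g: "g > 1"
    using larger_root_gt_one[OF Q g_root g_larger] .
  define a where "a = (1 - g) / g"
  have a: "-1 < a" "a < 0" and a1: "a + 1 = 1 / g"
    unfolding a_def using g by (auto simp: field_simps)
  have "RH1_01 w \<le> ereal (1 / (a + 1) - 1 + ln (a + 1))"
    unfolding w_def a_def[symmetric] using x g a by (intro RH1_power_weight_le) auto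
  also have "1 / (a + 1) - 1 + ln (a + 1) = Q"
    unfolding a1 using g g_root by (simp add: ln_div)
  finally show ?thesis
    using avg_powr_extremal_weight_eq_Bfun[OF g x] nn_integral_extremal_weight_critical_powr[OF g x]
    unfolding w_def by blast
qed

end
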